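(* Consider an irreducible Markov chain on $n$ states whose transition probabilities are rational numbers whose denominators all divide a positive integer $M$. Let $k\le n$ be the number of states having at least two possible successors (i.e. at least two states reachable in one step with positive probability). Let $\pi\in(0,1]^n$ be the invariant probability measure of the chain. Then the least common denominator of the rational numbers $\pi_1,\dots,\pi_n$ is at most $n M^{\min\{k,n-1\}}$. *)

theory Defs
  imports Complex_Main
begin

definition stochastic_matrix :: "nat \<Rightarrow> (nat \<Rightarrow> nat \<Rightarrow> real) \<Rightarrow> bool" where
  "stochastic_matrix n P \<longleftrightarrow>
     (\<forall>i<n. \<forall>j<n. P i j \<ge> 0) \<and> (\<forall>i<n. (\<Sum>j<n. P i j) = 1)"

definition trans_graph :: "nat \<Rightarrow> (nat \<Rightarrow> nat \<Rightarrow> real) \<Rightarrow> (nat \<times> nat) set" where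
  "trans_graph n P = {(i, j). i < n \<and> j < n \<and> P i j > 0}"

definition irreducible_chain :: "nat \<Rightarrow> (nat \<Rightarrow> nat \<Rightarrow> real) \<Rightarrow> bool" where
  "irreducible_chain n P \<longleftrightarrow> (\<forall>i<n. \<forall>j<n. (i, j) \<in> (trans_graph n P)\<^sup>+)"

definition invariant_distribution :: "nat \<Rightarrow> (nat \<Rightarrow> nat \<Rightarrow> real) \<Rightarrow> (nat \<Rightarrow> real) \<Rightarrow> bool" where
  "invariant_distribution n P \<pi> \<longleftrightarrow>
     (\<forall>i<n. \<pi> i \<ge> 0) \<and> (\<Sum>i<n. \<pi> i) = 1 \<and>
     (\<forall>j<n. (\<Sum>i<n. \<pi> i * P i j) = \<pi> j)"

definition branching_states :: "nat \<Rightarrow> (nat \<Rightarrow> nat \<Rightarrow> real) \<Rightarrow> nat" where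
  "branching_states n P = card {i. i < n \<and> card {j. j < n \<and> P i j > 0} \<ge> 2}"

text \<open>Least common denominator of the numbers x 0, ..., x (n-1) (meaningful when all are rational).\<close>
definition lcd :: "nat \<Rightarrow> (nat \<Rightarrow> real) \<Rightarrow> nat" where
  "lcd n x = (LEAST d::nat. d > 0 \<and> (\<forall>i<n. real d * x i \<in> \<int>))"

end

theory Submission
  imports Defs "HOL-Library.FuncSet"
begin

text \<open>The proof goes through the Markov chain tree theorem. For a root r let tree_sum r be the sum,
  over all spanning trees directed towards r, of the product of the transition probabilities along
  the tree edges. These numbers satisfy the balance equations, so for an irreducible chain the
  invariant distribution is their normalisation. Each tree has n - 1 edges, and an edge leaving a
  state with a single successor has probability 1, so M^min{k, n-1} clears the denominators of every
  tree_sum r. Finally every tree_sum r is at most 1, since the trees rooted at r form a subfamily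
  of all choices of one successor per non-root state, whose total weight is 1.\<close>

definition reaching_maps :: "nat \<Rightarrow> nat \<Rightarrow> (nat \<Rightarrow> nat) set" where
  "reaching_maps n r = {g \<in> {..<n} \<rightarrow>\<^sub>E {..<n}. \<forall>v<n. \<exists>m. (g ^^ m) v = r}"

text \<open>A spanning tree of {..<n} directed towards r, encoded by its parent map; the root is
  its own parent.\<close>
definition rooted_trees :: "nat \<Rightarrow> nat \<Rightarrow> (nat \<Rightarrow> nat) set" where
  "rooted_trees n r = {T \<in> reaching_maps n r. T r = r}"

definition tree_weight :: "nat \<Rightarrow> (nat \<Rightarrow> nat \<Rightarrow> real) \<Rightarrow> nat \<Rightarrow> (nat \<Rightarrow> nat) \<Rightarrow> real" where
  "tree_weight n P r T = (\<Prod>v\<in>{..<n} - {r}. P v (T v))"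

definition tree_sum :: "nat \<Rightarrow> (nat \<Rightarrow> nat \<Rightarrow> real) \<Rightarrow> nat \<Rightarrow> real" where
  "tree_sum n P r = (\<Sum>T\<in>rooted_trees n r. tree_weight n P r T)"

lemma finite_reaching_maps: "finite (reaching_maps n r)"
  unfolding reaching_maps_def by (simp add: finite_PiE)

lemma finite_rooted_trees: "finite (rooted_trees n r)"
  unfolding rooted_trees_def using finite_reaching_maps by simp

lemma reaching_mapsD:
  assumes "g \<in> reaching_maps n r"
  shows "g \<in> {..<n} \<rightarrow>\<^sub>E {..<n}" and "v < n \<Longrightarrow> g v < n" and "v < n \<Longrightarrow> \<exists>m. (g ^^ m) v = r"
  using assms by (auto simp: reaching_maps_def PiE_iff)

lemma funpow_reaches_if_eq_outside:
  assumes "\<forall>v. v \<noteq> r \<longrightarrow> f v = g v" and "(f ^^ m) v = r"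
  shows "\<exists>m'. (g ^^ m') v = r"
  using assms(2)
proof (induction m arbitrary: v)
  case 0
  then show ?case by (intro exI[of _ 0]) simp
next
  case (Suc m)
  show ?case
  proof (cases "v = r")
    case True
    then show ?thesis by (intro exI[of _ 0]) simp
  next
    case False
    have "(f ^^ m) (f v) = r"
      using Suc.prems by (simp add: funpow_Suc_right del: funpow.simps)
    then obtain m' where "(g ^^ m') (g v) = r"
      using Suc.IH False assms(1) by metis
    then have "(g ^^ Suc m') v = r"
      by (simp add: funpow_Suc_right del: funpow.simps)
    then show ?thesis by blast
  qed
qed

lemma reaching_maps_fun_upd_root:
  assumes "g \<in> reaching_maps n r" and "r < n" and "k < n"
  shows "g(r := k) \<in> reaching_maps n r"
  using assms funpow_reaches_if_eq_outside[of r g "g(r := k)"]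
  by (auto simp: reaching_maps_def PiE_iff extensional_def)

lemma rooted_tree_redirect:
  assumes T: "T \<in> rooted_trees n i" and "i < n" and "j < n"
  shows "T(i := j) \<in> reaching_maps n j"
proof -
  have "\<exists>m. (T(i := j) ^^ m) v = j" if v: "v < n" for v
  proof -
    obtain m where "(T ^^ m) v = i"
      using T v unfolding rooted_trees_def reaching_maps_def by blast
    then obtain m' where "(T(i := j) ^^ m') v = i"
      using funpow_reaches_if_eq_outside[of i T "T(i := j)"] by auto
    then have "(T(i := j) ^^ Suc m') v = j" by simp
    then show ?thesis by blast
  qed
  then show ?thesis
    using assms by (auto simp: rooted_trees_def reaching_maps_def PiE_iff extensional_def)
qed

lemma reaching_map_cut:
  assumes g: "g \<in> reaching_maps n j" and j: "j < n"
  obtains i where "i < n" "g i = j" "g(i := i) \<in> rooted_trees n i"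
proof -
  obtain m where "(g ^^ m) (g j) = j"
    using reaching_mapsD[OF g] j by blast
  then have gi: "g ((g ^^ m) j) = j"
    by (metis comp_apply funpow_Suc_right funpow.simps(2))
  define i where "i = (g ^^ m) j"
  have i: "i < n"
    unfolding i_def using reaching_mapsD(2)[OF g] j by (induction m) auto
  have "\<exists>m. (g ^^ m) v = i" if v: "v < n" for v
  proof -
    obtain m1 where "(g ^^ m1) v = j"
      using reaching_mapsD(3)[OF g v] by blast
    then have "(g ^^ (m + m1)) v = i"
      unfolding i_def by (simp add: funpow_add)
    then show ?thesis by blast
  qed
  then have "g \<in> reaching_maps n i"
    using reaching_mapsD(1)[OF g] by (simp add: reaching_maps_def)
  then have "g(i := i) \<in> rooted_trees n i"
    using reaching_maps_fun_upd_root[of g n i i] i by (simp add: rooted_trees_def)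
  then show thesis
    using that i gi i_def by blast
qed

lemma rooted_tree_redirect_path:
  assumes T: "T \<in> rooted_trees n i" and "a \<noteq> i" "T a = j" and "j < n"
  shows "\<exists>m. (T(i := j) ^^ m) j = i \<and> (\<forall>l<m. (T(i := j) ^^ l) j \<noteq> a)"
proof -
  have "\<exists>m. (T ^^ m) j = i"
    using T \<open>j < n\<close> by (auto simp: rooted_trees_def reaching_maps_def)
  define m where "m = (LEAST m. (T ^^ m) j = i)"
  have mi: "(T ^^ m) j = i"
    unfolding m_def using \<open>\<exists>m. (T ^^ m) j = i\<close> by (rule LeastI_ex)
  have before: "(T ^^ l) j \<noteq> i" if "l < m" for l
    using that not_less_Least unfolding m_def by blast
  have avoid: "(T ^^ l) j \<noteq> a" if "l < m" for l
  proof
    assume "(T ^^ l) j = a"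
    then have "(T ^^ Suc l) j = j"
      using \<open>T a = j\<close> by simp
    then have "(T ^^ (m mod Suc l)) j = i"
      using funpow_mod_eq[of "Suc l" T j m] mi by simp
    moreover have "m mod Suc l < m"
      using that mod_less_divisor[of "Suc l" m] by linarith
    ultimately show False
      using before by blast
  qed
  have "(T(i := j) ^^ l) j = (T ^^ l) j" if "l \<le> m" for l
    using that
  proof (induction l)
    case (Suc l)
    then have "(T ^^ l) j \<noteq> i"
      using before by simp
    with Suc show ?case by simp
  qed simp
  then show ?thesis
    using mi avoid by (intro exI[of _ m]) auto
qed

lemma redirect_inj_on:
  assumes "j < n"
  shows "inj_on (\<lambda>(i, T). T(i := j)) (SIGMA i:{..<n}. rooted_trees n i)"
proof (rule inj_onI, clarsimp)
  fix i1 T1 i2 T2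
  assume T1: "T1 \<in> rooted_trees n i1" and T2: "T2 \<in> rooted_trees n i2"
    and eq: "T1(i1 := j) = T2(i2 := j)"
  have i: "i1 = i2"
  proof (rule ccontr)
    assume ne: "i1 \<noteq> i2"
    have "T1 i2 = j" "T2 i1 = j"
      using fun_cong[OF eq, of i2] fun_cong[OF eq, of i1] ne by auto
    with ne obtain m1 m2
      where "(T1(i1 := j) ^^ m1) j = i1" "\<forall>l<m1. (T1(i1 := j) ^^ l) j \<noteq> i2"
        and "(T1(i1 := j) ^^ m2) j = i2" "\<forall>l<m2. (T1(i1 := j) ^^ l) j \<noteq> i1"
      using rooted_tree_redirect_path[OF T1 _ _ assms] rooted_tree_redirect_path[OF T2 _ _ assms]
      unfolding eq by metis
    with ne show False
      by (cases m1 m2 rule: linorder_cases) auto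
  qed
  have "T1 i1 = i1" "T2 i2 = i2"
    using T1 T2 by (auto simp: rooted_trees_def)
  with eq i show "i1 = i2 \<and> T1 = T2"
    by (metis fun_upd_triv fun_upd_upd)
qed

lemma redirect_image:
  assumes "j < n"
  shows "(\<lambda>(i, T). T(i := j)) ` (SIGMA i:{..<n}. rooted_trees n i) = reaching_maps n j"
proof
  show "(\<lambda>(i, T). T(i := j)) ` (SIGMA i:{..<n}. rooted_trees n i) \<subseteq> reaching_maps n j"
    using rooted_tree_redirect assms by auto
  show "reaching_maps n j \<subseteq> (\<lambda>(i, T). T(i := j)) ` (SIGMA i:{..<n}. rooted_trees n i)"
  proof
    fix g assume "g \<in> reaching_maps n j"
    then obtain i where "i < n" "g i = j" "g(i := i) \<in> rooted_trees n i"
      using reaching_map_cut assms by metis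
    then show "g \<in> (\<lambda>(i, T). T(i := j)) ` (SIGMA i:{..<n}. rooted_trees n i)"
      by (intro image_eqI[of _ _ "(i, g(i := i))"]) auto
  qed
qed

lemma prod_fun_upd_root:
  assumes "i < n"
  shows "(\<Prod>v<n. P v ((T(i := k)) v)) = P i k * tree_weight n P i T"
proof -
  have "(\<Prod>v<n. P v ((T(i := k)) v)) = P i k * (\<Prod>v\<in>{..<n} - {i}. P v ((T(i := k)) v))"
    using assms by (simp add: prod.remove)
  also have "(\<Prod>v\<in>{..<n} - {i}. P v ((T(i := k)) v)) = tree_weight n P i T"
    unfolding tree_weight_def by (rule prod.cong) auto
  finally show ?thesis .
qed

text \<open>In a map under which every state reaches j, j lies on a cycle. Cutting the edge that enters j
  on this cycle, or the edge that leaves j, yields a tree rooted at its tail, resp. at j.\<close>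
lemma sum_reaching_maps_by_last_edge:
  assumes "j < n"
  shows "(\<Sum>i<n. tree_sum n P i * P i j) = (\<Sum>g\<in>reaching_maps n j. \<Prod>v<n. P v (g v))"
proof -
  let ?S = "SIGMA i:{..<n}. rooted_trees n i"
  have "(\<Sum>i<n. tree_sum n P i * P i j) = (\<Sum>(i, T)\<in>?S. P i j * tree_weight n P i T)"
    unfolding tree_sum_def sum_distrib_right
    by (subst sum.Sigma) (auto simp: finite_rooted_trees mult.commute)
  also have "\<dots> = (\<Sum>(i, T)\<in>?S. \<Prod>v<n. P v ((T(i := j)) v))"
    by (rule sum.cong) (auto simp: prod_fun_upd_root simp del: fun_upd_apply)
  also have "\<dots> = (\<Sum>g\<in>reaching_maps n j. \<Prod>v<n. P v (g v))"
    by (rule sym, rule sum.reindex_cong[OF redirect_inj_on[OF assms] redirect_image[OF assms, symmetric]])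
      auto
  finally show ?thesis .
qed

lemma sum_reaching_maps_by_root_edge:
  assumes "j < n"
  shows "tree_sum n P j * (\<Sum>k<n. P j k) = (\<Sum>g\<in>reaching_maps n j. \<Prod>v<n. P v (g v))"
proof -
  let ?f = "\<lambda>(T, k). T(j := k)"
  have inj: "inj_on ?f (rooted_trees n j \<times> {..<n})"
  proof (rule inj_onI, clarsimp)
    fix T1 k1 T2 k2
    assume "T1 \<in> rooted_trees n j" "T2 \<in> rooted_trees n j" and eq: "T1(j := k1) = T2(j := k2)"
    then have "T1 j = T2 j"
      by (simp add: rooted_trees_def)
    then have "T1 = T2"
      using eq by (metis fun_upd_triv fun_upd_upd)
    then show "T1 = T2 \<and> k1 = k2"
      using fun_cong[OF eq, of j] by simp
  qed
  have "?f ` (rooted_trees n j \<times> {..<n}) \<subseteq> reaching_maps n j"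
    using reaching_maps_fun_upd_root assms by (auto simp: rooted_trees_def)
  moreover have "g \<in> ?f ` (rooted_trees n j \<times> {..<n})" if g: "g \<in> reaching_maps n j" for g
    using reaching_maps_fun_upd_root[OF g assms assms] reaching_mapsD(2)[OF g assms]
    by (intro image_eqI[of _ _ "(g(j := j), g j)"]) (auto simp: rooted_trees_def)
  ultimately have img: "?f ` (rooted_trees n j \<times> {..<n}) = reaching_maps n j"
    by blast
  have "tree_sum n P j * (\<Sum>k<n. P j k)
      = (\<Sum>(T, k)\<in>rooted_trees n j \<times> {..<n}. P j k * tree_weight n P j T)"
    unfolding tree_sum_def sum_product sum.cartesian_product by (simp add: mult.commute)
  also have "\<dots> = (\<Sum>(T, k)\<in>rooted_trees n j \<times> {..<n}. \<Prod>v<n. P v ((T(j := k)) v))"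
    using assms by (intro sum.cong) (auto simp: prod_fun_upd_root simp del: fun_upd_apply)
  also have "\<dots> = (\<Sum>g\<in>reaching_maps n j. \<Prod>v<n. P v (g v))"
    by (rule sym, rule sum.reindex_cong[OF inj img[symmetric]]) auto
  finally show ?thesis .
qed

theorem markov_chain_tree_balance:
  assumes "j < n"
  shows "(\<Sum>i<n. tree_sum n P i * P i j) = tree_sum n P j * (\<Sum>k<n. P j k)"
  using sum_reaching_maps_by_last_edge[OF assms] sum_reaching_maps_by_root_edge[OF assms] by simp


lemma tree_weight_nonneg:
  assumes "\<forall>i<n. \<forall>j<n. P i j \<ge> 0" and "T \<in> rooted_trees n r"
  shows "tree_weight n P r T \<ge> 0"
  unfolding tree_weight_def using assms
  by (intro prod_nonneg) (auto simp: rooted_trees_def dest: reaching_mapsD(2))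

lemma tree_sum_nonneg:
  assumes "\<forall>i<n. \<forall>j<n. P i j \<ge> 0"
  shows "tree_sum n P r \<ge> 0"
  unfolding tree_sum_def using tree_weight_nonneg[OF assms] by (intro sum_nonneg) auto

lemma tree_sum_le_1:
  assumes st: "stochastic_matrix n P" and r: "r < n"
  shows "tree_sum n P r \<le> 1"
proof -
  define A where "A = {..<n} - {r}"
  have inj: "inj_on (\<lambda>T. restrict T A) (rooted_trees n r)"
  proof (rule inj_onI, rule ext)
    fix T1 T2 v
    assume T: "T1 \<in> rooted_trees n r" "T2 \<in> rooted_trees n r" and eq: "restrict T1 A = restrict T2 A"
    show "T1 v = T2 v"
    proof (cases "v \<in> A")
      case True
      then show ?thesis using fun_cong[OF eq, of v] by simp
    next
      case False
      then show ?thesis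
        using T by (auto simp: A_def rooted_trees_def reaching_maps_def PiE_iff extensional_def)
    qed
  qed
  have sub: "(\<lambda>T. restrict T A) ` rooted_trees n r \<subseteq> A \<rightarrow>\<^sub>E {..<n}"
    by (auto simp: A_def rooted_trees_def reaching_maps_def PiE_iff split: if_splits)
  have "tree_sum n P r = (\<Sum>T\<in>rooted_trees n r. \<Prod>v\<in>A. P v (restrict T A v))"
    unfolding tree_sum_def tree_weight_def A_def by (intro sum.cong prod.cong) auto
  also have "\<dots> = (\<Sum>h\<in>(\<lambda>T. restrict T A) ` rooted_trees n r. \<Prod>v\<in>A. P v (h v))"
    by (simp add: sum.reindex[OF inj])
  also have "\<dots> \<le> (\<Sum>h\<in>A \<rightarrow>\<^sub>E {..<n}. \<Prod>v\<in>A. P v (h v))"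
    using st sub by (intro sum_mono2 prod_nonneg)
      (auto simp: A_def finite_PiE stochastic_matrix_def PiE_iff)
  also have "\<dots> = (\<Prod>v\<in>A. \<Sum>u<n. P v u)"
    by (rule prod_sum_PiE[symmetric]) (auto simp: A_def)
  also have "\<dots> = 1"
    using st by (intro prod.neutral) (auto simp: stochastic_matrix_def A_def)
  finally show ?thesis .
qed

text \<open>Each state other than r gets as parent a successor that is strictly closer to r.\<close>
lemma irreducible_chain_positive_rooted_tree:
  assumes irr: "irreducible_chain n P" and r: "r < n"
  obtains T where "T \<in> rooted_trees n r" "\<forall>v<n. v \<noteq> r \<longrightarrow> P v (T v) > 0"
proof -
  define E where "E = trans_graph n P"
  define d where "d v = (LEAST m. (v, r) \<in> E ^^ m)" for v
  have dist: "(v, r) \<in> E ^^ d v" if "v < n" for v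
  proof -
    have "\<exists>m. (v, r) \<in> E ^^ m"
      using irr that r unfolding irreducible_chain_def E_def by (metis trancl_power)
    then show ?thesis
      unfolding d_def by (rule LeastI_ex)
  qed
  have "\<exists>u. (v, u) \<in> E \<and> d u < d v" if v: "v < n" "v \<noteq> r" for v
  proof -
    obtain q where q: "d v = Suc q"
      using dist[OF v(1)] v(2) by (cases "d v") auto
    then obtain u where "(v, u) \<in> E" "(u, r) \<in> E ^^ q"
      using dist[OF v(1)] by (metis relpow_Suc_D2)
    moreover from this(2) have "d u \<le> q"
      unfolding d_def by (rule Least_le)
    ultimately show ?thesis
      using q by auto
  qed
  then obtain f where f: "\<And>v. v < n \<Longrightarrow> v \<noteq> r \<Longrightarrow> (v, f v) \<in> E \<and> d (f v) < d v"
    by metis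
  define T where "T = restrict (f(r := r)) {..<n}"
  have edge: "T v < n \<and> P v (T v) > 0 \<and> d (T v) < d v" if "v < n" "v \<noteq> r" for v
    using f[OF that] that by (auto simp: T_def E_def trans_graph_def)
  have "\<exists>m. (T ^^ m) v = r" if "v < n" for v
    using that
  proof (induction "d v" arbitrary: v rule: less_induct)
    case less
    show ?case
    proof (cases "v = r")
      case False
      then obtain m where "(T ^^ m) (T v) = r"
        using less edge by blast
      then have "(T ^^ Suc m) v = r"
        by (simp add: funpow_Suc_right del: funpow.simps)
      then show ?thesis by blast
    qed (auto intro: exI[of _ 0])
  qed
  moreover have "T \<in> {..<n} \<rightarrow>\<^sub>E {..<n}"
    using edge r by (auto simp: T_def)
  ultimately have "T \<in> rooted_trees n r"
    using r by (simp add: rooted_trees_def reaching_maps_def T_def)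
  then show thesis
    using that edge by blast
qed

lemma tree_sum_pos:
  assumes "\<forall>i<n. \<forall>j<n. P i j \<ge> 0" and "irreducible_chain n P" and "r < n"
  shows "tree_sum n P r > 0"
proof -
  obtain T where T: "T \<in> rooted_trees n r" "\<forall>v<n. v \<noteq> r \<longrightarrow> P v (T v) > 0"
    using irreducible_chain_positive_rooted_tree assms(2,3) by blast
  have "0 < tree_weight n P r T"
    unfolding tree_weight_def using T(2) by (intro prod_pos) auto
  also have "\<dots> \<le> tree_sum n P r"
    unfolding tree_sum_def using T(1) tree_weight_nonneg[OF assms(1)]
    by (intro member_le_sum) (auto simp: finite_rooted_trees)
  finally show ?thesis .
qed


lemma invariant_vector_vanishes:
  assumes P: "\<forall>i<n. \<forall>j<n. P i j \<ge> 0" and irr: "irreducible_chain n P"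
    and x: "\<forall>i<n. x i \<ge> 0" and inv: "\<forall>j<n. (\<Sum>i<n. x i * P i j) = x j"
    and "j0 < n" "x j0 = 0"
  shows "\<forall>i<n. x i = 0"
proof -
  have step: "x a = 0" if ab: "(a, b) \<in> trans_graph n P" and "x b = 0" for a b
  proof -
    have "a < n" "b < n" "P a b > 0"
      using ab by (auto simp: trans_graph_def)
    moreover have "(\<Sum>i<n. x i * P i b) = 0"
      using inv \<open>b < n\<close> \<open>x b = 0\<close> by simp
    ultimately have "\<forall>i\<in>{..<n}. x i * P i b = 0"
      using P x sum_nonneg_eq_0_iff[of "{..<n}" "\<lambda>i. x i * P i b"] by simp
    then show ?thesis
      using \<open>a < n\<close> \<open>P a b > 0\<close> by fastforce
  qed
  show ?thesis
  proof (intro allI impI)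
    fix i assume "i < n"
    then have "(i, j0) \<in> (trans_graph n P)\<^sup>+"
      using irr \<open>j0 < n\<close> by (simp add: irreducible_chain_def)
    then show "x i = 0"
      by (induction rule: converse_trancl_induct) (use step \<open>x j0 = 0\<close> in blast)+
  qed
qed

text \<open>For the least c with x \<le> c y, the vector c y - x is nonnegative, invariant and has a zero
  entry.\<close>
lemma invariant_vectors_proportional:
  assumes P: "\<forall>i<n. \<forall>j<n. P i j \<ge> 0" and irr: "irreducible_chain n P" and "n > 0"
    and x_inv: "\<forall>j<n. (\<Sum>i<n. x i * P i j) = x j"
    and y_pos: "\<forall>i<n. y i > 0" and y_inv: "\<forall>j<n. (\<Sum>i<n. y i * P i j) = y j"
  obtains c where "\<forall>i<n. x i = c * y i"
proof -
  define c where "c = Max ((\<lambda>i. x i / y i) ` {..<n})"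
  have "c \<in> (\<lambda>i. x i / y i) ` {..<n}"
    unfolding c_def using \<open>n > 0\<close> by (intro Max_in) auto
  then obtain j where j: "j < n" "c = x j / y j"
    by auto
  define z where "z i = c * y i - x i" for i
  have "z i \<ge> 0" if "i < n" for i
  proof -
    have "x i / y i \<le> c"
      unfolding c_def using that by (intro Max_ge) auto
    then show ?thesis
      using y_pos that by (simp add: z_def pos_divide_le_eq)
  qed
  moreover have "\<forall>j<n. (\<Sum>i<n. z i * P i j) = z j"
    using x_inv y_inv
    by (simp add: z_def left_diff_distrib sum_subtractf mult.assoc flip: sum_distrib_left)
  moreover have "z j = 0"
    using j y_pos by (simp add: z_def less_imp_neq[symmetric])
  ultimately have "\<forall>i<n. z i = 0"
    using invariant_vector_vanishes[OF P irr, of z] j(1) by blast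
  then have "\<forall>i<n. x i = c * y i"
    by (simp add: z_def)
  then show thesis
    by (rule that)
qed

lemma invariant_distribution_pos:
  assumes "\<forall>i<n. \<forall>j<n. P i j \<ge> 0" and "irreducible_chain n P"
    and inv: "invariant_distribution n P \<pi>" and "i < n"
  shows "\<pi> i > 0"
proof (rule ccontr)
  have \<pi>: "\<forall>i<n. \<pi> i \<ge> 0" "\<forall>j<n. (\<Sum>i<n. \<pi> i * P i j) = \<pi> j" "(\<Sum>i<n. \<pi> i) = 1"
    using inv by (auto simp: invariant_distribution_def)
  assume "\<not> \<pi> i > 0"
  then have "\<pi> i = 0"
    using \<pi>(1) \<open>i < n\<close> by (simp add: not_less order.antisym)
  then have "\<forall>i<n. \<pi> i = 0"
    using invariant_vector_vanishes[OF assms(1,2) \<pi>(1,2) \<open>i < n\<close>] by blast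
  then show False
    using \<pi>(3) by simp
qed

theorem invariant_distribution_eq_tree_sum:
  assumes st: "stochastic_matrix n P" and irr: "irreducible_chain n P"
    and inv: "invariant_distribution n P \<pi>" and "i < n"
  shows "\<pi> i = tree_sum n P i / (\<Sum>l<n. tree_sum n P l)"
proof -
  have P: "\<forall>i<n. \<forall>j<n. P i j \<ge> 0"
    using st by (simp add: stochastic_matrix_def)
  have tree_inv: "\<forall>j<n. (\<Sum>i<n. tree_sum n P i * P i j) = tree_sum n P j"
    using markov_chain_tree_balance st by (simp add: stochastic_matrix_def)
  obtain c where c: "\<forall>i<n. tree_sum n P i = c * \<pi> i"
    using invariant_vectors_proportional[OF P irr _ tree_inv, of \<pi>] invariant_distribution_pos[OF P irr inv]
      inv \<open>i < n\<close> by (auto simp: invariant_distribution_def)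
  have "(\<Sum>l<n. tree_sum n P l) = c"
    using c inv by (simp add: invariant_distribution_def sum_distrib_left[symmetric])
  moreover have "c * \<pi> i > 0"
    using c tree_sum_pos[OF P irr \<open>i < n\<close>] \<open>i < n\<close> by simp
  then have "c > 0"
    using invariant_distribution_pos[OF P irr inv \<open>i < n\<close>] by (simp add: zero_less_mult_iff)
  ultimately show ?thesis
    using c \<open>i < n\<close> by simp
qed


lemma tree_sum_scaled_Ints:
  assumes "\<forall>v<n. \<forall>u<n. D v * P v u \<in> \<int>"
  shows "(\<Prod>v\<in>{..<n} - {r}. D v) * tree_sum n P r \<in> \<int>"
  unfolding tree_sum_def tree_weight_def sum_distrib_left prod.distrib[symmetric] using assms
  by (intro Ints_sum Ints_prod) (auto simp: rooted_trees_def dest: reaching_mapsD(2))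

lemma single_successor_row_Ints:
  assumes st: "stochastic_matrix n P" and "v < n" "u < n"
    and "card {j. j < n \<and> P v j > 0} < 2"
  shows "P v u \<in> \<int>"
proof (cases "P v u > 0")
  case False
  then show ?thesis
    using st assms(2,3) by (force simp: stochastic_matrix_def)
next
  case True
  define S where "S = {j. j < n \<and> P v j > 0}"
  have "u \<in> S" "card S \<le> 1"
    using True assms by (auto simp: S_def)
  then have S: "S = {u}"
    using card_le_Suc0_iff_eq[of S] by (auto simp: S_def)
  have "1 = (\<Sum>j<n. P v j)"
    using st \<open>v < n\<close> by (simp add: stochastic_matrix_def)
  also have "\<dots> = (\<Sum>j\<in>S. P v j)"
    using st \<open>v < n\<close> by (intro sum.mono_neutral_right) (force simp: stochastic_matrix_def S_def)+
  finally have "P v u = 1"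
    using S by simp
  then show ?thesis
    by simp
qed

text \<open>A row of P needs the factor M only if its state branches, and no tree uses the row of its root.\<close>
lemma tree_sum_denominator:
  assumes st: "stochastic_matrix n P" and MP: "\<forall>i<n. \<forall>j<n. real M * P i j \<in> \<int>" and "r < n"
  shows "real M ^ min (branching_states n P) (n - 1) * tree_sum n P r \<in> \<int>"
proof (cases "branching_states n P \<le> n - 1")
  case True
  define B where "B = {i. i < n \<and> card {j. j < n \<and> P i j > 0} \<ge> 2}"
  define D where "D v = (if v \<in> B then real M else 1)" for v
  have "real M ^ branching_states n P = (\<Prod>v<n. D v)"
    unfolding D_def branching_states_def B_def
    by (simp add: prod.If_cases Int_def)
  also have "\<dots> = D r * (\<Prod>v\<in>{..<n} - {r}. D v)"
    using \<open>r < n\<close> by (simp add: prod.remove)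
  finally have "real M ^ branching_states n P * tree_sum n P r
      = D r * ((\<Prod>v\<in>{..<n} - {r}. D v) * tree_sum n P r)"
    by (simp only: mult.assoc)
  also have "\<dots> \<in> \<int>"
    using MP single_successor_row_Ints[OF st]
    by (intro Ints_mult tree_sum_scaled_Ints) (auto simp: D_def B_def)
  finally show ?thesis
    using True by simp
next
  case False
  have "(\<Prod>v\<in>{..<n} - {r}. real M) * tree_sum n P r \<in> \<int>"
    using MP by (intro tree_sum_scaled_Ints) simp
  then show ?thesis
    using False \<open>r < n\<close> by simp
qed

lemma lcd_le:
  assumes "d > 0" and "\<forall>i<n. real d * x i \<in> \<int>"
  shows "lcd n x \<le> d"
  unfolding lcd_def using assms by (intro Least_le) simp

lemma normalized_vector_lcd_le:
  assumes "K > 0" and K_a: "\<forall>i<n. K * a i \<in> \<int>" and a: "\<forall>i<n. 0 \<le> a i \<and> a i \<le> 1"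
    and W: "(\<Sum>l<n. a l) > 0" and x: "\<forall>i<n. x i = a i / (\<Sum>l<n. a l)"
  shows "(\<forall>i<n. x i \<in> \<rat>) \<and> real (lcd n x) \<le> real n * K"
proof -
  define A where "A = K * (\<Sum>l<n. a l)"
  have "A \<in> \<int>"
    unfolding A_def sum_distrib_left using K_a by (intro Ints_sum) auto
  moreover have "A > 0"
    using \<open>K > 0\<close> W by (simp add: A_def)
  ultimately obtain d :: nat where d: "real d = A" "d > 0"
  proof (elim Ints_cases)
    fix N assume "A = of_int N" "A > 0"
    then show thesis
      using that[of "nat N"] by simp
  qed
  have scaled: "x i = (K * a i) / A" if "i < n" for i
    using x that \<open>K > 0\<close> by (simp add: A_def)
  have rat: "\<forall>i<n. x i \<in> \<rat>"
    using scaled K_a \<open>A \<in> \<int>\<close> Ints_subset_Rats by (auto intro!: Rats_divide)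
  have "lcd n x \<le> d"
    using d \<open>A > 0\<close> K_a scaled by (intro lcd_le) auto
  then have "real (lcd n x) \<le> A"
    using d by linarith
  also have "A \<le> (\<Sum>l<n. K)"
    unfolding A_def sum_distrib_left using a \<open>K > 0\<close> by (intro sum_mono) simp
  finally show ?thesis
    using rat by simp
qed

theorem mainTheorem8:
  fixes n M :: nat and P :: "nat \<Rightarrow> nat \<Rightarrow> real" and \<pi> :: "nat \<Rightarrow> real"
  assumes "M > 0"
    and "stochastic_matrix n P"
    and "\<forall>i<n. \<forall>j<n. real M * P i j \<in> \<int>"
    and "irreducible_chain n P"
    and "invariant_distribution n P \<pi>"
  shows "(\<forall>i<n. \<pi> i \<in> \<rat>) \<and>
         real (lcd n \<pi>) \<le> real n * real M ^ min (branching_states n P) (n - 1)"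
proof -
  have P: "\<forall>i<n. \<forall>j<n. P i j \<ge> 0"
    using assms(2) by (simp add: stochastic_matrix_def)
  have "n > 0"
    using assms(5) by (cases n) (auto simp: invariant_distribution_def)
  then have "0 < tree_sum n P 0"
    using tree_sum_pos[OF P assms(4)] by simp
  also have "\<dots> \<le> (\<Sum>l<n. tree_sum n P l)"
    using \<open>n > 0\<close> tree_sum_nonneg[OF P] by (intro member_le_sum) auto
  finally show ?thesis
    using assms tree_sum_denominator tree_sum_nonneg[OF P] tree_sum_le_1
      invariant_distribution_eq_tree_sum
    by (intro normalized_vector_lcd_le) auto
qed

end
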